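(* Let $\mathfrak{M}$ be a variety of associative rings such that for all finite rings $R,S\in\mathfrak{M}$, $\Gamma(R)\cong\Gamma(S)$ implies $R\cong S$. Then $T(\mathfrak{M})$ contains a polynomial of the form $mx$, where $m=q_1^{\beta_1}q_2^{\beta_2}\cdots q_t^{\beta_t}$ with $q_1,\ldots,q_t$ pairwise distinct prime numbers and $\beta_i\leq 3$ for all $i\leq t$.
   Context: All rings are associative, not necessarily commutative and not necessarily with identity. For a ring $R$, the zero-divisor graph $\Gamma(R)$ is the graph whose vertices are all nonzero (one-sided or two-sided) zero-divisors of $R$, two distinct vertices $x,y$ being adjacent iff $xy=0$ or $yx=0$. For a variety $\mathfrak{M}$, $T(\mathfrak{M})$ denotes the T-ideal (in the free associative ring $\mathbb{Z}\langle x_1,x_2,\ldots\rangle$) of all polynomial identities satisfied by all rings of $\mathfrak{M}$. *)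

theory Defs
  imports Main "HOL-Computational_Algebra.Primes"
begin

record 'a rg =
  rcar  :: "'a set"
  radd  :: "'a \<Rightarrow> 'a \<Rightarrow> 'a"
  rmul  :: "'a \<Rightarrow> 'a \<Rightarrow> 'a"
  rneg  :: "'a \<Rightarrow> 'a"
  rzero :: "'a"

definition is_rng :: "('a, 'b) rg_scheme \<Rightarrow> bool" where
  "is_rng R \<longleftrightarrow>
     rzero R \<in> rcar R \<and>
     (\<forall>x\<in>rcar R. \<forall>y\<in>rcar R. radd R x y \<in> rcar R \<and> rmul R x y \<in> rcar R) \<and>
     (\<forall>x\<in>rcar R. rneg R x \<in> rcar R) \<and>
     (\<forall>x\<in>rcar R. \<forall>y\<in>rcar R. \<forall>z\<in>rcar R.
        radd R (radd R x y) z = radd R x (radd R y z) \<and>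
        rmul R (rmul R x y) z = rmul R x (rmul R y z) \<and>
        rmul R x (radd R y z) = radd R (rmul R x y) (rmul R x z) \<and>
        rmul R (radd R x y) z = radd R (rmul R x z) (rmul R y z)) \<and>
     (\<forall>x\<in>rcar R. \<forall>y\<in>rcar R. radd R x y = radd R y x) \<and>
     (\<forall>x\<in>rcar R. radd R x (rzero R) = x \<and> radd R x (rneg R x) = rzero R)"

definition rng_iso :: "('a, 'c) rg_scheme \<Rightarrow> ('b, 'd) rg_scheme \<Rightarrow> bool" where
  "rng_iso R S \<longleftrightarrow> (\<exists>f. bij_betw f (rcar R) (rcar S) \<and>
      (\<forall>x\<in>rcar R. \<forall>y\<in>rcar R. f (radd R x y) = radd S (f x) (f y) \<and>
                              f (rmul R x y) = rmul S (f x) (f y)))"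

definition zd_vertices :: "('a, 'c) rg_scheme \<Rightarrow> 'a set" where
  "zd_vertices R = {x \<in> rcar R. x \<noteq> rzero R \<and>
      (\<exists>y\<in>rcar R. y \<noteq> rzero R \<and> (rmul R x y = rzero R \<or> rmul R y x = rzero R))}"

definition zd_adj :: "('a, 'c) rg_scheme \<Rightarrow> 'a \<Rightarrow> 'a \<Rightarrow> bool" where
  "zd_adj R x y \<longleftrightarrow> x \<in> zd_vertices R \<and> y \<in> zd_vertices R \<and> x \<noteq> y \<and>
      (rmul R x y = rzero R \<or> rmul R y x = rzero R)"

definition zd_graph_iso :: "('a, 'c) rg_scheme \<Rightarrow> ('b, 'd) rg_scheme \<Rightarrow> bool" where
  "zd_graph_iso R S \<longleftrightarrow> (\<exists>f. bij_betw f (zd_vertices R) (zd_vertices S) \<and>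
      (\<forall>x\<in>zd_vertices R. \<forall>y\<in>zd_vertices R. zd_adj R x y \<longleftrightarrow> zd_adj S (f x) (f y)))"

(* Elements of the free associative ring Z<x_1,x_2,...> (without constant term),
   represented by terms *)
datatype rterm = Var nat | Zero | Add rterm rterm | Neg rterm | Mul rterm rterm

primrec eval :: "('a, 'c) rg_scheme \<Rightarrow> (nat \<Rightarrow> 'a) \<Rightarrow> rterm \<Rightarrow> 'a" where
  "eval R \<rho> (Var i) = \<rho> i"
| "eval R \<rho> Zero = rzero R"
| "eval R \<rho> (Add s t) = radd R (eval R \<rho> s) (eval R \<rho> t)"
| "eval R \<rho> (Neg s) = rneg R (eval R \<rho> s)"
| "eval R \<rho> (Mul s t) = rmul R (eval R \<rho> s) (eval R \<rho> t)"

definition satisfies :: "('a, 'c) rg_scheme \<Rightarrow> rterm \<Rightarrow> bool" where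
  "satisfies R p \<longleftrightarrow> (\<forall>\<rho>. (\<forall>i. \<rho> i \<in> rcar R) \<longrightarrow> eval R \<rho> p = rzero R)"

(* The variety defined by a set of identities Sigma, represented by its members with
   carrier contained in nat (every countable ring is isomorphic to one of them). *)
definition variety :: "rterm set \<Rightarrow> nat rg set" where
  "variety \<Sigma> = {R. is_rng R \<and> (\<forall>p\<in>\<Sigma>. satisfies R p)}"

(* T(M): all identities satisfied by all rings of M (countable rings suffice, since an
   identity fails in a ring iff it fails in some finitely generated subring). *)
definition T_ideal :: "nat rg set \<Rightarrow> rterm set" where
  "T_ideal M = {p. \<forall>R\<in>M. satisfies R p}"

primrec smul_term :: "nat \<Rightarrow> rterm \<Rightarrow> rterm" where
  "smul_term 0 t = Zero"
| "smul_term (Suc n) t = Add t (smul_term n t)"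

end

theory Submission
  imports Defs "HOL-Library.Nat_Bijection"
begin

text \<open>
  Let m be the least positive integer with m x in T(M). It exists: otherwise every defining
  identity has zero linear part, since substituting x_i := t a turns an identity into a
  polynomial in t with ring coefficients that vanishes for every t, and eliminating degrees
  via Q(t) \<mapsto> 2^E Q(t) - Q(2t) shows that a fixed positive integer kills its linear coefficient;
  then every zero ring Z_n^0 (the group Z_n with zero multiplication) lies in M. If q^4 divided m
  for a prime q, minimality of m would give a ring in M and an element a with (m/q) a \<noteq> 0, so
  c = (m/q^2) a has additive order q^2 and c^2 = 0, and the subrings generated by c and q c are
  copies of Z_{q^2}^0 and Z_q^0. Either way M contains Z_{q^2}^0 and Z_q^0 \<times> Z_q^0 (with q = 2 in
  the first case): non-isomorphic rings with zero multiplication of the same order, whose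
  zero-divisor graphs are both complete on q^2 - 1 vertices.
\<close>

section \<open>Natural multiples in a ring\<close>

primrec nsmul :: "('a, 'b) rg_scheme \<Rightarrow> nat \<Rightarrow> 'a \<Rightarrow> 'a" where
  "nsmul R 0 x = rzero R"
| "nsmul R (Suc k) x = radd R x (nsmul R k x)"

lemma eval_smul_term: "eval R \<rho> (smul_term m t) = nsmul R m (eval R \<rho> t)"
  by (induction m) auto

locale rng =
  fixes R :: "('a, 'b) rg_scheme"
  assumes is_rng: "is_rng R"
begin

lemma zero_closed [simp]: "rzero R \<in> rcar R"
  using is_rng unfolding is_rng_def by blast

lemma add_closed [simp]: "x \<in> rcar R \<Longrightarrow> y \<in> rcar R \<Longrightarrow> radd R x y \<in> rcar R"
  using is_rng unfolding is_rng_def by blast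

lemma mul_closed [simp]: "x \<in> rcar R \<Longrightarrow> y \<in> rcar R \<Longrightarrow> rmul R x y \<in> rcar R"
  using is_rng unfolding is_rng_def by blast

lemma neg_closed [simp]: "x \<in> rcar R \<Longrightarrow> rneg R x \<in> rcar R"
  using is_rng unfolding is_rng_def by blast

lemma add_assoc:
  "x \<in> rcar R \<Longrightarrow> y \<in> rcar R \<Longrightarrow> z \<in> rcar R \<Longrightarrow> radd R (radd R x y) z = radd R x (radd R y z)"
  using is_rng unfolding is_rng_def by blast

lemma mul_assoc:
  "x \<in> rcar R \<Longrightarrow> y \<in> rcar R \<Longrightarrow> z \<in> rcar R \<Longrightarrow> rmul R (rmul R x y) z = rmul R x (rmul R y z)"
  using is_rng unfolding is_rng_def by blast

lemma distrib_left:
  "x \<in> rcar R \<Longrightarrow> y \<in> rcar R \<Longrightarrow> z \<in> rcar R \<Longrightarrow> rmul R x (radd R y z) = radd R (rmul R x y) (rmul R x z)"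
  using is_rng unfolding is_rng_def by blast

lemma distrib_right:
  "x \<in> rcar R \<Longrightarrow> y \<in> rcar R \<Longrightarrow> z \<in> rcar R \<Longrightarrow> rmul R (radd R x y) z = radd R (rmul R x z) (rmul R y z)"
  using is_rng unfolding is_rng_def by blast

lemma add_commute: "x \<in> rcar R \<Longrightarrow> y \<in> rcar R \<Longrightarrow> radd R x y = radd R y x"
  using is_rng unfolding is_rng_def by blast

lemma add_zero [simp]: "x \<in> rcar R \<Longrightarrow> radd R x (rzero R) = x"
  using is_rng unfolding is_rng_def by blast

lemma add_neg [simp]: "x \<in> rcar R \<Longrightarrow> radd R x (rneg R x) = rzero R"
  using is_rng unfolding is_rng_def by blast

lemma zero_add [simp]: "x \<in> rcar R \<Longrightarrow> radd R (rzero R) x = x"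
  by (metis add_commute add_zero zero_closed)

lemma neg_add [simp]: "x \<in> rcar R \<Longrightarrow> radd R (rneg R x) x = rzero R"
  by (metis add_commute add_neg neg_closed)

lemma add_left_cancel:
  assumes "x \<in> rcar R" "y \<in> rcar R" "z \<in> rcar R" "radd R x y = radd R x z"
  shows "y = z"
proof -
  have "y = radd R (rneg R x) (radd R x y)"
    using assms(1,2) by (simp flip: add_assoc)
  also have "\<dots> = z"
    using assms by (simp flip: add_assoc)
  finally show ?thesis .
qed

lemma neg_unique: "x \<in> rcar R \<Longrightarrow> y \<in> rcar R \<Longrightarrow> radd R x y = rzero R \<Longrightarrow> y = rneg R x"
  by (metis add_left_cancel add_neg neg_closed)

lemma add_left_imp_zero: "x \<in> rcar R \<Longrightarrow> y \<in> rcar R \<Longrightarrow> radd R x y = x \<Longrightarrow> y = rzero R"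
  by (metis add_left_cancel add_zero zero_closed)

lemma neg_neg [simp]: "x \<in> rcar R \<Longrightarrow> rneg R (rneg R x) = x"
  by (metis neg_unique neg_add neg_closed)

lemma mul_zero_right [simp]: "x \<in> rcar R \<Longrightarrow> rmul R x (rzero R) = rzero R"
  by (metis distrib_left zero_add zero_closed mul_closed add_left_imp_zero)

lemma mul_zero_left [simp]: "x \<in> rcar R \<Longrightarrow> rmul R (rzero R) x = rzero R"
  by (metis distrib_right zero_add zero_closed mul_closed add_left_imp_zero)

lemma neg_zero [simp]: "rneg R (rzero R) = rzero R"
  by (metis neg_unique zero_closed add_zero)

lemma neg_add_distrib:
  assumes "x \<in> rcar R" "y \<in> rcar R"
  shows "rneg R (radd R x y) = radd R (rneg R x) (rneg R y)"
proof (rule neg_unique [symmetric])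
  have "radd R (radd R x y) (radd R (rneg R x) (rneg R y))
      = radd R x (radd R y (radd R (rneg R y) (rneg R x)))"
    using assms by (simp add: add_assoc add_commute [of "rneg R x"])
  also have "\<dots> = rzero R"
    using assms by (simp flip: add_assoc)
  finally show "radd R (radd R x y) (radd R (rneg R x) (rneg R y)) = rzero R" .
qed (use assms in auto)

lemma add_add_swap:
  "a \<in> rcar R \<Longrightarrow> b \<in> rcar R \<Longrightarrow> c \<in> rcar R \<Longrightarrow> d \<in> rcar R \<Longrightarrow>
    radd R (radd R a b) (radd R c d) = radd R (radd R a c) (radd R b d)"
  by (metis add_assoc add_closed add_commute)

lemma eval_closed: "\<forall>i. \<rho> i \<in> rcar R \<Longrightarrow> eval R \<rho> p \<in> rcar R"
  by (induction p) auto

lemma nsmul_closed [simp]: "x \<in> rcar R \<Longrightarrow> nsmul R k x \<in> rcar R"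
  by (induction k) auto

lemma nsmul_add: "x \<in> rcar R \<Longrightarrow> nsmul R (k + l) x = radd R (nsmul R k x) (nsmul R l x)"
  by (induction k) (auto simp: add_assoc)

lemma nsmul_mult: "x \<in> rcar R \<Longrightarrow> nsmul R (k * l) x = nsmul R k (nsmul R l x)"
  by (induction k) (auto simp: nsmul_add)

lemma nsmul_zero [simp]: "nsmul R k (rzero R) = rzero R"
  by (induction k) auto

lemma nsmul_add_distrib:
  "x \<in> rcar R \<Longrightarrow> y \<in> rcar R \<Longrightarrow> nsmul R k (radd R x y) = radd R (nsmul R k x) (nsmul R k y)"
  by (induction k) (auto simp: add_add_swap)

lemma nsmul_neg: "x \<in> rcar R \<Longrightarrow> nsmul R k (rneg R x) = rneg R (nsmul R k x)"
  by (metis neg_unique nsmul_add_distrib add_neg nsmul_zero neg_closed nsmul_closed)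

lemma nsmul_mul_left:
  "x \<in> rcar R \<Longrightarrow> y \<in> rcar R \<Longrightarrow> rmul R (nsmul R k x) y = nsmul R k (rmul R x y)"
  by (induction k) (auto simp: distrib_right)

lemma nsmul_mul_right:
  "x \<in> rcar R \<Longrightarrow> y \<in> rcar R \<Longrightarrow> rmul R x (nsmul R k y) = nsmul R k (rmul R x y)"
  by (induction k) (auto simp: distrib_left)

lemma nsmul_diff_eq_zero:
  assumes "x \<in> rcar R" "nsmul R k x = nsmul R l x"
  shows "nsmul R (k - l) x = rzero R"
proof (cases "l \<le> k")
  case True
  then have "radd R (nsmul R l x) (nsmul R (k - l) x) = nsmul R l x"
    using assms by (simp flip: nsmul_add)
  then show ?thesis
    using assms(1) by (intro add_left_imp_zero [of "nsmul R l x"]) auto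
qed simp

lemma nsmul_mod: "x \<in> rcar R \<Longrightarrow> nsmul R n x = rzero R \<Longrightarrow> nsmul R k x = nsmul R (k mod n) x"
  by (metis div_mult_mod_eq nsmul_add nsmul_mult nsmul_zero zero_add nsmul_closed)

lemma nsmul_eq_zero_iff_dvd_order:
  assumes x: "x \<in> rcar R" and n: "0 < n" "nsmul R n x = rzero R"
  obtains r where "\<And>k. nsmul R k x = rzero R \<longleftrightarrow> r dvd k"
proof
  define r where "r = (LEAST r. 0 < r \<and> nsmul R r x = rzero R)"
  have r: "0 < r \<and> nsmul R r x = rzero R"
    unfolding r_def by (rule LeastI [of _ n]) (use n in blast)
  fix k
  show "nsmul R k x = rzero R \<longleftrightarrow> r dvd k"
  proof
    assume "nsmul R k x = rzero R"
    then have "nsmul R (k mod r) x = rzero R"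
      using nsmul_mod [OF x] r by metis
    moreover have "k mod r < r"
      using r by simp
    ultimately show "r dvd k"
      using not_less_Least [of "k mod r" "\<lambda>r. 0 < r \<and> nsmul R r x = rzero R"]
      unfolding r_def [symmetric] by (auto simp: dvd_eq_mod_eq_0)
  qed (use r x in \<open>auto simp: nsmul_mult mult.commute\<close>)
qed

lemma nsmul_eq_zero_iff_dvd_prime_square:
  assumes q: "prime q" and c: "c \<in> rcar R"
    and "nsmul R (q\<^sup>2) c = rzero R" and "nsmul R q c \<noteq> rzero R"
  shows "nsmul R k c = rzero R \<longleftrightarrow> q\<^sup>2 dvd k"
proof -
  obtain r where r: "\<And>k. nsmul R k c = rzero R \<longleftrightarrow> r dvd k"
    using nsmul_eq_zero_iff_dvd_order [OF c _ assms(3)] q by (auto simp: prime_gt_0_nat)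
  obtain i where i: "i \<le> 2" "r = q ^ i"
    using divides_primepow_nat [OF q] r assms(3) by blast
  have "i = 2"
    using r [of q] assms(4) i by (auto simp: le_Suc_eq numeral_2_eq_2)
  then show ?thesis
    using r i by simp
qed

lemma square_zero_element_of_order_prime_square:
  assumes m: "\<And>x. x \<in> rcar R \<Longrightarrow> nsmul R m x = rzero R" and q: "prime q" "q ^ 4 dvd m"
    and a: "a \<in> rcar R" and ne: "nsmul R (m div q) a \<noteq> rzero R"
  obtains c where "c \<in> rcar R" "\<And>k. nsmul R k c = rzero R \<longleftrightarrow> q\<^sup>2 dvd k" "rmul R c c = rzero R"
proof -
  obtain w where w: "m = q ^ 4 * w"
    using q(2) by blast
  text \<open>\<open>c\<close> has additive order exactly \<open>q\<^sup>2\<close>, and \<open>c\<^sup>2 = w m a\<^sup>2 = 0\<close>.\<close>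
  define c where "c = nsmul R (q\<^sup>2 * w) a"
  have c: "c \<in> rcar R"
    using a by (simp add: c_def)
  have "m div q = q * (q\<^sup>2 * w)"
    using q(1) by (simp add: w prime_gt_0_nat power_Suc numeral_Bit0 power2_eq_square mult.assoc)
  then have "nsmul R q c \<noteq> rzero R"
    using ne a by (simp add: c_def flip: nsmul_mult)
  moreover have "nsmul R (q\<^sup>2) c = rzero R"
    using m a by (simp add: c_def w numeral_Bit0 power_add mult.assoc flip: nsmul_mult)
  ultimately have "nsmul R k c = rzero R \<longleftrightarrow> q\<^sup>2 dvd k" for k
    using nsmul_eq_zero_iff_dvd_prime_square [OF q(1) c] by blast
  moreover have "rmul R c c = rzero R"
  proof -
    have "rmul R c c = nsmul R (w * m) (rmul R a a)"
      using a by (simp add: c_def w nsmul_mul_left nsmul_mul_right numeral_Bit0 power_add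
          ac_simps flip: nsmul_mult)
    also have "\<dots> = rzero R"
      using m a by (simp add: nsmul_mult)
    finally show ?thesis .
  qed
  ultimately show ?thesis
    using that c by blast
qed

end

section \<open>Polynomials in a natural parameter\<close>

text \<open>
  A list \<open>L\<close> of pairs \<open>(d, e)\<close> stands for the polynomial \<open>\<Sum> t\<^sup>d e\<close> in a parameter \<open>t \<in> \<nat>\<close>
  with coefficients \<open>e\<close> in the ring; repeated degrees are allowed.
\<close>

primrec rsum :: "('a, 'b) rg_scheme \<Rightarrow> 'a list \<Rightarrow> 'a" where
  "rsum R [] = rzero R"
| "rsum R (x # xs) = radd R x (rsum R xs)"

definition poly_val :: "('a, 'b) rg_scheme \<Rightarrow> (nat \<times> 'a) list \<Rightarrow> nat \<Rightarrow> 'a" where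
  "poly_val R L t = rsum R (map (\<lambda>(d, e). nsmul R (t ^ d) e) L)"

definition linear_coeff :: "('a, 'b) rg_scheme \<Rightarrow> (nat \<times> 'a) list \<Rightarrow> 'a" where
  "linear_coeff R L = rsum R (map snd (filter (\<lambda>(d, e). d = 1) L))"

definition poly_neg :: "('a, 'b) rg_scheme \<Rightarrow> (nat \<times> 'a) list \<Rightarrow> (nat \<times> 'a) list" where
  "poly_neg R L = map (\<lambda>(d, e). (d, rneg R e)) L"

definition poly_mult :: "('a, 'b) rg_scheme \<Rightarrow> (nat \<times> 'a) list \<Rightarrow> (nat \<times> 'a) list \<Rightarrow> (nat \<times> 'a) list" where
  "poly_mult R L1 L2 = concat (map (\<lambda>(d1, e1). map (\<lambda>(d2, e2). (d1 + d2, rmul R e1 e2)) L2) L1)"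

text \<open>
  Passing from \<open>Q(t)\<close> to \<open>2\<^sup>E Q(t) - Q(2t)\<close> cancels the terms of degree \<open>E\<close> and multiplies the
  linear coefficient by \<open>2\<^sup>E - 2\<close>; \<open>elim_factor D\<close> collects these factors for \<open>E = D, \<dots>, 2\<close>.
\<close>

definition scale_diff :: "('a, 'b) rg_scheme \<Rightarrow> nat \<Rightarrow> (nat \<times> 'a) list \<Rightarrow> (nat \<times> 'a) list" where
  "scale_diff R E L = map (\<lambda>(d, e). (d, nsmul R (2 ^ E - 2 ^ d) e)) (filter (\<lambda>(d, e). d < E) L)"

definition elim_factor :: "nat \<Rightarrow> nat" where
  "elim_factor D = (\<Prod>k\<in>{2..D}. 2 ^ k - 2)"

lemma elim_factor_pos: "0 < elim_factor D"
proof -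
  have "(2::nat) ^ k - 2 > 0" if "k \<in> {2..D}" for k
  proof -
    have "(2::nat) ^ 2 \<le> 2 ^ k"
      using that by (intro power_increasing) auto
    then show ?thesis by simp
  qed
  then show ?thesis
    unfolding elim_factor_def by (simp add: prod_pos)
qed

lemma elim_factor_Suc: "1 \<le> D \<Longrightarrow> elim_factor (Suc D) = elim_factor D * (2 ^ Suc D - 2)"
proof -
  assume "1 \<le> D"
  then have "{2..Suc D} = insert (Suc D) {2..D}" by auto
  then show ?thesis
    unfolding elim_factor_def by (simp add: mult.commute)
qed

context rng
begin

lemma rsum_closed [simp]: "set xs \<subseteq> rcar R \<Longrightarrow> rsum R xs \<in> rcar R"
  by (induction xs) auto

lemma rsum_filter_closed [simp]:
  "snd ` set L \<subseteq> rcar R \<Longrightarrow> rsum R (map snd (filter P L)) \<in> rcar R"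
  by (rule rsum_closed) auto

lemma rsum_append:
  "set xs \<subseteq> rcar R \<Longrightarrow> set ys \<subseteq> rcar R \<Longrightarrow> rsum R (xs @ ys) = radd R (rsum R xs) (rsum R ys)"
  by (induction xs) (auto simp: add_assoc)

lemma poly_val_closed [simp]: "snd ` set L \<subseteq> rcar R \<Longrightarrow> poly_val R L t \<in> rcar R"
  unfolding poly_val_def by (induction L) auto

lemma poly_val_Nil [simp]: "poly_val R [] t = rzero R"
  by (simp add: poly_val_def)

lemma poly_val_Cons: "poly_val R ((d, e) # L) t = radd R (nsmul R (t ^ d) e) (poly_val R L t)"
  by (simp add: poly_val_def)

lemma poly_val_append:
  "snd ` set L1 \<subseteq> rcar R \<Longrightarrow> snd ` set L2 \<subseteq> rcar R \<Longrightarrow>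
    poly_val R (L1 @ L2) t = radd R (poly_val R L1 t) (poly_val R L2 t)"
  by (induction L1) (auto simp: poly_val_Cons add_assoc)

lemma poly_val_neg:
  "snd ` set L \<subseteq> rcar R \<Longrightarrow> poly_val R (poly_neg R L) t = rneg R (poly_val R L t)"
  unfolding poly_neg_def by (induction L) (auto simp: poly_val_Cons nsmul_neg neg_add_distrib)

lemma poly_val_monom_mult:
  "e1 \<in> rcar R \<Longrightarrow> snd ` set L2 \<subseteq> rcar R \<Longrightarrow>
    poly_val R (map (\<lambda>(d2, e2). (d1 + d2, rmul R e1 e2)) L2) t
      = rmul R (nsmul R (t ^ d1) e1) (poly_val R L2 t)"
proof (induction L2)
  case (Cons x L2)
  obtain d2 e2 where x: "x = (d2, e2)" by (cases x)
  with Cons.prems have e2: "e2 \<in> rcar R" by auto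
  have "nsmul R (t ^ (d1 + d2)) (rmul R e1 e2) = rmul R (nsmul R (t ^ d1) e1) (nsmul R (t ^ d2) e2)"
    using e2 Cons.prems by (simp add: nsmul_mul_left nsmul_mul_right power_add mult.commute flip: nsmul_mult)
  then show ?case
    using Cons e2 x by (simp add: poly_val_Cons distrib_left)
qed simp

lemma poly_mult_closed: "snd ` set L1 \<subseteq> rcar R \<Longrightarrow> snd ` set L2 \<subseteq> rcar R \<Longrightarrow>
    snd ` set (poly_mult R L1 L2) \<subseteq> rcar R"
  unfolding poly_mult_def by force

lemma poly_val_mult:
  "snd ` set L1 \<subseteq> rcar R \<Longrightarrow> snd ` set L2 \<subseteq> rcar R \<Longrightarrow>
    poly_val R (poly_mult R L1 L2) t = rmul R (poly_val R L1 t) (poly_val R L2 t)"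
proof (induction L1)
  case (Cons x L1)
  obtain d1 e1 where x: "x = (d1, e1)" by (cases x)
  with Cons.prems have e1: "e1 \<in> rcar R" by auto
  have "poly_mult R (x # L1) L2 = map (\<lambda>(d2, e2). (d1 + d2, rmul R e1 e2)) L2 @ poly_mult R L1 L2"
    by (simp add: poly_mult_def x)
  moreover have "snd ` set (map (\<lambda>(d2, e2). (d1 + d2, rmul R e1 e2)) L2) \<subseteq> rcar R"
    using Cons.prems e1 by auto
  ultimately show ?case
    using Cons e1 poly_mult_closed [of L1 L2]
    by (simp add: poly_val_append poly_val_monom_mult x poly_val_Cons distrib_right)
qed (simp add: poly_mult_def)

lemma linear_coeff_closed [simp]: "snd ` set L \<subseteq> rcar R \<Longrightarrow> linear_coeff R L \<in> rcar R"
  unfolding linear_coeff_def by (induction L) auto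

lemma linear_coeff_append:
  "snd ` set L1 \<subseteq> rcar R \<Longrightarrow> snd ` set L2 \<subseteq> rcar R \<Longrightarrow>
    linear_coeff R (L1 @ L2) = radd R (linear_coeff R L1) (linear_coeff R L2)"
  unfolding linear_coeff_def by (simp, rule rsum_append) auto

lemma linear_coeff_neg:
  "snd ` set L \<subseteq> rcar R \<Longrightarrow> linear_coeff R (poly_neg R L) = rneg R (linear_coeff R L)"
  unfolding linear_coeff_def poly_neg_def by (induction L) (auto simp: neg_add_distrib)

lemma linear_coeff_mult:
  assumes "\<forall>(d, e)\<in>set L1. 1 \<le> d" "\<forall>(d, e)\<in>set L2. 1 \<le> d"
  shows "linear_coeff R (poly_mult R L1 L2) = rzero R"
proof -
  have "filter (\<lambda>(d, e). d = 1) (poly_mult R L1 L2) = []"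
    using assms unfolding poly_mult_def by (fastforce simp: filter_empty_conv)
  then show ?thesis
    by (simp add: linear_coeff_def)
qed

lemma nsmul_poly_val_scale_diff:
  assumes "\<forall>(d, e)\<in>set L. d \<le> E \<and> e \<in> rcar R"
  shows "nsmul R (2 ^ E) (poly_val R L t) = radd R (poly_val R (scale_diff R E L) t) (poly_val R L (2 * t))"
  using assms
proof (induction L)
  case (Cons x L)
  obtain d e where x: "x = (d, e)" by (cases x)
  with Cons.prems have d: "d \<le> E" and e: "e \<in> rcar R" by auto
  have L: "snd ` set L \<subseteq> rcar R" "snd ` set (scale_diff R E L) \<subseteq> rcar R"
    using Cons.prems by (auto simp: scale_diff_def)
  have IH: "nsmul R (2 ^ E) (poly_val R (x # L) t)
      = radd R (nsmul R (2 ^ E * t ^ d) e) (radd R (poly_val R (scale_diff R E L) t) (poly_val R L (2 * t)))"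
    using Cons e L by (simp add: x poly_val_Cons nsmul_add_distrib nsmul_mult)
  consider "d < E" | "d = E"
    using d by linarith
  then show ?case
  proof cases
    case 1
    have "(2::nat) ^ d \<le> 2 ^ E"
      using d by (simp add: power_increasing)
    then have "2 ^ E * t ^ d = t ^ d * (2 ^ E - 2 ^ d) + (2 * t) ^ d"
      by (simp add: power_mult_distrib algebra_simps diff_mult_distrib)
    then have "nsmul R (2 ^ E * t ^ d) e
        = radd R (nsmul R (t ^ d) (nsmul R (2 ^ E - 2 ^ d) e)) (nsmul R ((2 * t) ^ d) e)"
      using e by (simp add: nsmul_add nsmul_mult)
    moreover have "scale_diff R E (x # L) = (d, nsmul R (2 ^ E - 2 ^ d) e) # scale_diff R E L"
      using 1 by (simp add: x scale_diff_def)
    ultimately show ?thesis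
      using IH e L by (simp add: x poly_val_Cons add_add_swap)
  next
    case 2
    then have "nsmul R (2 ^ E * t ^ d) e = nsmul R ((2 * t) ^ d) e"
      by (simp add: power_mult_distrib)
    moreover have "scale_diff R E (x # L) = scale_diff R E L"
      using 2 by (simp add: x scale_diff_def)
    ultimately show ?thesis
      using IH e L by (simp add: x poly_val_Cons flip: add_assoc)
        (metis add_commute nsmul_closed poly_val_closed)
  qed
qed (simp add: scale_diff_def)

lemma linear_coeff_scale_diff:
  "snd ` set L \<subseteq> rcar R \<Longrightarrow> 2 \<le> E \<Longrightarrow>
    linear_coeff R (scale_diff R E L) = nsmul R (2 ^ E - 2) (linear_coeff R L)"
  unfolding linear_coeff_def scale_diff_def
  by (induction L) (auto simp: nsmul_add_distrib split: prod.splits)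

lemma linear_coeff_annihilated:
  assumes "\<forall>(d, e)\<in>set L. 1 \<le> d \<and> d \<le> D \<and> e \<in> rcar R" "\<forall>t. poly_val R L t = rzero R"
  shows "nsmul R (elim_factor D) (linear_coeff R L) = rzero R"
  using assms
proof (induction D arbitrary: L)
  case 0
  then have "L = []" by (cases L) auto
  then show ?case by (simp add: linear_coeff_def)
next
  case (Suc D)
  have L: "snd ` set L \<subseteq> rcar R"
    using Suc.prems by auto
  show ?case
  proof (cases "D = 0")
    case True
    with Suc.prems have "\<forall>(d, e)\<in>set L. d = 1 \<and> e \<in> rcar R"
      by auto
    then have "poly_val R L 1 = linear_coeff R L"
      unfolding poly_val_def linear_coeff_def by (induction L) auto
    then have "linear_coeff R L = rzero R"
      using Suc.prems by simp
    then show ?thesis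
      using True by (simp add: elim_factor_def)
  next
    case False
    let ?L = "scale_diff R (Suc D) L"
    have "snd ` set ?L \<subseteq> rcar R"
      using L by (auto simp: scale_diff_def)
    moreover have "nsmul R (2 ^ Suc D) (poly_val R L t) = radd R (poly_val R ?L t) (poly_val R L (2 * t))" for t
      using Suc.prems by (intro nsmul_poly_val_scale_diff) auto
    ultimately have "\<forall>t. poly_val R ?L t = rzero R"
      using Suc.prems by simp
    moreover have "\<forall>(d, e)\<in>set ?L. 1 \<le> d \<and> d \<le> D \<and> e \<in> rcar R"
      using Suc.prems by (auto simp: scale_diff_def)
    ultimately have "nsmul R (elim_factor D) (linear_coeff R ?L) = rzero R"
      using Suc.IH by blast
    then show ?thesis
      using False L by (simp add: linear_coeff_scale_diff elim_factor_Suc nsmul_mult)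
  qed
qed

end

section \<open>The linear part of an identity\<close>

primrec term_degree :: "rterm \<Rightarrow> nat" where
  "term_degree (Var j) = 1"
| "term_degree Zero = 1"
| "term_degree (Add s t) = max (term_degree s) (term_degree t)"
| "term_degree (Neg s) = term_degree s"
| "term_degree (Mul s t) = term_degree s + term_degree t"

text \<open>
  The coefficient of \<open>x\<^sub>i\<close> in the linear part of \<open>p\<close> is \<open>fst (lin_occs i p) - snd (lin_occs i p)\<close>,
  kept as a pair of naturals counting positive and negative occurrences.
\<close>

primrec lin_occs :: "nat \<Rightarrow> rterm \<Rightarrow> nat \<times> nat" where
  "lin_occs i (Var j) = (if i = j then (1, 0) else (0, 0))"
| "lin_occs i Zero = (0, 0)"
| "lin_occs i (Add s t) = (fst (lin_occs i s) + fst (lin_occs i t), snd (lin_occs i s) + snd (lin_occs i t))"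
| "lin_occs i (Neg s) = (snd (lin_occs i s), fst (lin_occs i s))"
| "lin_occs i (Mul s t) = (0, 0)"

primrec var_expansion :: "('a, 'b) rg_scheme \<Rightarrow> nat \<Rightarrow> 'a \<Rightarrow> rterm \<Rightarrow> (nat \<times> 'a) list" where
  "var_expansion R i a (Var j) = (if j = i then [(1, a)] else [])"
| "var_expansion R i a Zero = []"
| "var_expansion R i a (Add s t) = var_expansion R i a s @ var_expansion R i a t"
| "var_expansion R i a (Neg s) = poly_neg R (var_expansion R i a s)"
| "var_expansion R i a (Mul s t) = poly_mult R (var_expansion R i a s) (var_expansion R i a t)"

context rng
begin

lemma var_expansion_degrees:
  "a \<in> rcar R \<Longrightarrow> \<forall>(d, e)\<in>set (var_expansion R i a p). 1 \<le> d \<and> d \<le> term_degree p \<and> e \<in> rcar R"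
  by (induction p) (fastforce simp: poly_neg_def poly_mult_def)+

lemma var_expansion_closed: "a \<in> rcar R \<Longrightarrow> snd ` set (var_expansion R i a p) \<subseteq> rcar R"
  using var_expansion_degrees by fastforce

lemma eval_var_expansion:
  "a \<in> rcar R \<Longrightarrow>
    eval R (\<lambda>j. if j = i then nsmul R t a else rzero R) p = poly_val R (var_expansion R i a p) t"
  by (induction p) (auto simp: poly_val_Cons poly_val_append poly_val_neg poly_val_mult var_expansion_closed)

lemma linear_coeff_var_expansion:
  assumes a: "a \<in> rcar R"
  shows "linear_coeff R (var_expansion R i a p)
    = radd R (nsmul R (fst (lin_occs i p)) a) (rneg R (nsmul R (snd (lin_occs i p)) a))"
proof (induction p)
  case (Var j)
  then show ?case
    using a by (auto simp: linear_coeff_def)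
next
  case (Add s t)
  then show ?case
    using a by (simp add: linear_coeff_append var_expansion_closed nsmul_add neg_add_distrib add_add_swap)
next
  case (Neg s)
  then show ?case
    using a by (simp add: linear_coeff_neg var_expansion_closed neg_add_distrib add_commute)
next
  case (Mul s t)
  have "\<forall>(d, e)\<in>set (var_expansion R i a s). 1 \<le> d" "\<forall>(d, e)\<in>set (var_expansion R i a t). 1 \<le> d"
    using var_expansion_degrees [OF a] by fastforce+
  then show ?case
    by (simp add: linear_coeff_mult)
qed (simp add: linear_coeff_def)

lemma identity_annihilates_lin_occs:
  fixes i :: nat
  assumes "satisfies R p" and a: "a \<in> rcar R"
  defines "P \<equiv> fst (lin_occs i p)" and "Q \<equiv> snd (lin_occs i p)"
  shows "nsmul R (elim_factor (term_degree p) * ((P - Q) + (Q - P))) a = rzero R"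
proof -
  define N where "N = elim_factor (term_degree p)"
  have "\<forall>t. poly_val R (var_expansion R i a p) t = rzero R"
    using assms(1) a by (auto simp: satisfies_def eval_var_expansion [symmetric])
  then have "nsmul R N (radd R (nsmul R P a) (rneg R (nsmul R Q a))) = rzero R"
    using linear_coeff_annihilated [OF var_expansion_degrees [OF a]]
    by (simp add: N_def P_def Q_def linear_coeff_var_expansion [OF a])
  then have "radd R (nsmul R (N * P) a) (rneg R (nsmul R (N * Q) a)) = rzero R"
    using a by (simp add: nsmul_add_distrib nsmul_neg nsmul_mult)
  then have "nsmul R (N * P) a = nsmul R (N * Q) a"
    using a by (metis neg_unique neg_neg neg_closed nsmul_closed)
  then have "nsmul R (N * P - N * Q) a = rzero R" "nsmul R (N * Q - N * P) a = rzero R"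
    using a by (simp_all add: nsmul_diff_eq_zero)
  then show ?thesis
    using a by (simp add: N_def [symmetric] nsmul_add algebra_simps diff_mult_distrib2)
qed

end

section \<open>Zero rings\<close>

definition zero_ring :: "nat \<Rightarrow> nat rg" where
  "zero_ring n = \<lparr>rcar = {..<n}, radd = (\<lambda>x y. (x + y) mod n), rmul = (\<lambda>x y. 0),
                  rneg = (\<lambda>x. (n - x) mod n), rzero = 0\<rparr>"

lemma zero_ring_simps [simp]:
  "rcar (zero_ring n) = {..<n}" "radd (zero_ring n) x y = (x + y) mod n" "rmul (zero_ring n) x y = 0"
  "rneg (zero_ring n) x = (n - x) mod n" "rzero (zero_ring n) = 0"
  by (simp_all add: zero_ring_def)

lemma is_rng_zero_ring: "1 \<le> n \<Longrightarrow> is_rng (zero_ring n)"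
  unfolding is_rng_def by (auto simp: mod_add_left_eq mod_add_right_eq add_ac)

lemma nsmul_zero_ring: "nsmul (zero_ring n) k x = (k * x) mod n"
  by (induction k) (auto simp: mod_add_right_eq)

primrec term_vars :: "rterm \<Rightarrow> nat set" where
  "term_vars (Var j) = {j}"
| "term_vars Zero = {}"
| "term_vars (Add s t) = term_vars s \<union> term_vars t"
| "term_vars (Neg s) = term_vars s"
| "term_vars (Mul s t) = term_vars s \<union> term_vars t"

lemma finite_term_vars [simp]: "finite (term_vars p)"
  by (induction p) auto

lemma eval_zero_ring_less: "1 \<le> n \<Longrightarrow> \<forall>i. \<rho> i < n \<Longrightarrow> eval (zero_ring n) \<rho> p < n"
  by (induction p) auto

lemma eval_zero_ring:
  assumes n: "1 \<le> n" and \<rho>: "\<forall>i. \<rho> i < n" and A: "finite A" "term_vars p \<subseteq> A"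
  shows "int (eval (zero_ring n) \<rho> p)
    = (\<Sum>i\<in>A. (int (fst (lin_occs i p)) - int (snd (lin_occs i p))) * int (\<rho> i)) mod int n"
proof -
  define lin where "lin q = (\<Sum>i\<in>A. (int (fst (lin_occs i q)) - int (snd (lin_occs i q))) * int (\<rho> i))"
    for q
  have "int (eval (zero_ring n) \<rho> p) = lin p mod int n"
    using A(2)
  proof (induction p)
    case (Var j)
    have "lin (Var j) = (\<Sum>i\<in>A. if i = j then int (\<rho> j) else 0)"
      unfolding lin_def by (rule sum.cong) auto
    with Var A(1) \<rho> show ?case
      by simp
  next
    case (Add s t)
    have "lin (Add s t) = lin s + lin t"
      by (simp add: lin_def sum.distrib [symmetric] algebra_simps)
    with Add show ?case
      by (simp add: of_nat_mod mod_add_eq)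
  next
    case (Neg s)
    have "lin (Neg s) = - lin s"
      by (simp add: lin_def sum_negf [symmetric] algebra_simps)
    moreover have "eval (zero_ring n) \<rho> s \<le> n"
      using eval_zero_ring_less [OF n \<rho>] less_imp_le by blast
    ultimately show ?case
      using Neg by (simp add: of_nat_mod of_nat_diff mod_diff_right_eq [symmetric] mod_minus_eq)
  qed (simp_all add: lin_def)
  then show ?thesis
    by (simp add: lin_def)
qed

lemma zero_ring_satisfies_linear_free:
  assumes "1 \<le> n" and "\<forall>i. fst (lin_occs i p) = snd (lin_occs i p)"
  shows "satisfies (zero_ring n) p"
  unfolding satisfies_def
proof (intro allI impI)
  fix \<rho> :: "nat \<Rightarrow> nat"
  assume "\<forall>i. \<rho> i \<in> rcar (zero_ring n)"
  then have "int (eval (zero_ring n) \<rho> p) = 0"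
    using assms eval_zero_ring [of n \<rho> "term_vars p" p] by simp
  then show "eval (zero_ring n) \<rho> p = rzero (zero_ring n)"
    by simp
qed

section \<open>Products and subrings\<close>

text \<open>Carriers of the rings in a variety live in \<open>\<nat>\<close>, so pairs are encoded by \<open>prod_encode\<close>.\<close>

definition prod_ring :: "nat rg \<Rightarrow> nat rg \<Rightarrow> nat rg" where
  "prod_ring R S = \<lparr>rcar = prod_encode ` (rcar R \<times> rcar S),
     radd = (\<lambda>x y. prod_encode (radd R (fst (prod_decode x)) (fst (prod_decode y)),
                                 radd S (snd (prod_decode x)) (snd (prod_decode y)))),
     rmul = (\<lambda>x y. prod_encode (rmul R (fst (prod_decode x)) (fst (prod_decode y)),
                                 rmul S (snd (prod_decode x)) (snd (prod_decode y)))),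
     rneg = (\<lambda>x. prod_encode (rneg R (fst (prod_decode x)), rneg S (snd (prod_decode x)))),
     rzero = prod_encode (rzero R, rzero S)\<rparr>"

lemma prod_ring_simps [simp]:
  "rcar (prod_ring R S) = prod_encode ` (rcar R \<times> rcar S)"
  "radd (prod_ring R S) x y = prod_encode (radd R (fst (prod_decode x)) (fst (prod_decode y)),
                                           radd S (snd (prod_decode x)) (snd (prod_decode y)))"
  "rmul (prod_ring R S) x y = prod_encode (rmul R (fst (prod_decode x)) (fst (prod_decode y)),
                                           rmul S (snd (prod_decode x)) (snd (prod_decode y)))"
  "rneg (prod_ring R S) x = prod_encode (rneg R (fst (prod_decode x)), rneg S (snd (prod_decode x)))"
  "rzero (prod_ring R S) = prod_encode (rzero R, rzero S)"
  by (simp_all add: prod_ring_def)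

lemma is_rng_prod_ring:
  assumes "is_rng R" "is_rng S"
  shows "is_rng (prod_ring R S)"
proof -
  interpret r: rng R by unfold_locales fact
  interpret s: rng S by unfold_locales fact
  show ?thesis
    unfolding is_rng_def
    by (auto simp: r.add_assoc s.add_assoc r.mul_assoc s.mul_assoc r.distrib_left s.distrib_left
        r.distrib_right s.distrib_right intro: r.add_commute s.add_commute)
qed

lemma eval_prod_ring:
  "eval (prod_ring R S) \<rho> p
    = prod_encode (eval R (\<lambda>i. fst (prod_decode (\<rho> i))) p, eval S (\<lambda>i. snd (prod_decode (\<rho> i))) p)"
  by (induction p) auto

lemma nsmul_prod_ring:
  "nsmul (prod_ring R S) k z = prod_encode (nsmul R k (fst (prod_decode z)), nsmul S k (snd (prod_decode z)))"
  by (induction k) auto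

lemma satisfies_prod_ring:
  assumes "satisfies R p" "satisfies S p"
  shows "satisfies (prod_ring R S) p"
  unfolding satisfies_def
proof (intro allI impI)
  fix \<rho> :: "nat \<Rightarrow> nat"
  assume \<rho>: "\<forall>i. \<rho> i \<in> rcar (prod_ring R S)"
  have "fst (prod_decode (\<rho> i)) \<in> rcar R \<and> snd (prod_decode (\<rho> i)) \<in> rcar S" for i
  proof -
    obtain u v where "u \<in> rcar R" "v \<in> rcar S" "\<rho> i = prod_encode (u, v)"
      using \<rho> by force
    then show ?thesis by simp
  qed
  then show "eval (prod_ring R S) \<rho> p = rzero (prod_ring R S)"
    using assms by (simp add: satisfies_def eval_prod_ring)
qed

lemma satisfies_embedding:
  fixes S :: "('a, 'b) rg_scheme" and R :: "('c, 'd) rg_scheme" and h :: "'a \<Rightarrow> 'c"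
  assumes "is_rng S"
    and h: "\<forall>x\<in>rcar S. h x \<in> rcar R" "inj_on h (rcar S)"
      "\<forall>x\<in>rcar S. \<forall>y\<in>rcar S. h (radd S x y) = radd R (h x) (h y) \<and> h (rmul S x y) = rmul R (h x) (h y)"
      "\<forall>x\<in>rcar S. h (rneg S x) = rneg R (h x)" "h (rzero S) = rzero R"
    and "satisfies R p"
  shows "satisfies S p"
  unfolding satisfies_def
proof (intro allI impI)
  interpret S: rng S by unfold_locales fact
  fix \<rho> :: "nat \<Rightarrow> 'a"
  assume \<rho>: "\<forall>i. \<rho> i \<in> rcar S"
  have eval_h: "eval R (\<lambda>i. h (\<rho> i)) q = h (eval S \<rho> q)" for q
    by (induction q) (use h \<rho> S.eval_closed in auto)
  have "eval R (\<lambda>i. h (\<rho> i)) p = rzero R"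
    using assms(7) h(1) \<rho> unfolding satisfies_def by auto
  then have "h (eval S \<rho> p) = h (rzero S)"
    using eval_h h(5) by simp
  then show "eval S \<rho> p = rzero S"
    using h(2) S.eval_closed [OF \<rho>] S.zero_closed by (meson inj_onD)
qed

context rng
begin

text \<open>An element \<open>d\<close> of additive order \<open>n\<close> with \<open>d\<^sup>2 = 0\<close> generates a copy of \<open>zero_ring n\<close>.\<close>

lemma satisfies_zero_ring_of_order:
  assumes d: "d \<in> rcar R" and n: "1 \<le> n" and order: "\<And>k. nsmul R k d = rzero R \<longleftrightarrow> n dvd k"
    and dd: "rmul R d d = rzero R" and "satisfies R p"
  shows "satisfies (zero_ring n) p"
proof (rule satisfies_embedding [OF is_rng_zero_ring [OF n], where h = "\<lambda>k. nsmul R k d"])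
  have mod_n: "nsmul R k d = nsmul R (k mod n) d" for k
    using nsmul_mod [OF d] order by simp
  show "inj_on (\<lambda>k. nsmul R k d) (rcar (zero_ring n))"
  proof (rule inj_onI)
    fix x y
    assume "x \<in> rcar (zero_ring n)" "y \<in> rcar (zero_ring n)" "nsmul R x d = nsmul R y d"
    moreover from this have "n dvd x - y" "n dvd y - x"
      using nsmul_diff_eq_zero [OF d] order by metis+
    ultimately show "x = y"
      by (metis dvd_imp_le le_less_trans lessThan_iff nat_neq_iff zero_less_diff zero_ring_simps(1) less_imp_diff_less)
  qed
  show "\<forall>x\<in>rcar (zero_ring n). \<forall>y\<in>rcar (zero_ring n).
      nsmul R (radd (zero_ring n) x y) d = radd R (nsmul R x d) (nsmul R y d) \<and>
      nsmul R (rmul (zero_ring n) x y) d = rmul R (nsmul R x d) (nsmul R y d)"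
    using d dd by (auto simp: mod_n [of "x + y" for x y, symmetric] nsmul_add nsmul_mul_left nsmul_mul_right)
  show "\<forall>x\<in>rcar (zero_ring n). nsmul R (rneg (zero_ring n) x) d = rneg R (nsmul R x d)"
  proof
    fix x
    assume "x \<in> rcar (zero_ring n)"
    then have "radd R (nsmul R x d) (nsmul R (n - x) d) = rzero R"
      using d order by (simp flip: nsmul_add)
    then show "nsmul R (rneg (zero_ring n) x) d = rneg R (nsmul R x d)"
      using d by (simp flip: mod_n add: neg_unique)
  qed
qed (use d assms(5) in auto)

end

section \<open>Two rings with the same zero-divisor graph\<close>

lemma zd_graph_iso_zero_mult:
  assumes R: "is_rng R" "\<forall>x\<in>rcar R. \<forall>y\<in>rcar R. rmul R x y = rzero R" "finite (rcar R)"
    and S: "is_rng S" "\<forall>x\<in>rcar S. \<forall>y\<in>rcar S. rmul S x y = rzero S" "finite (rcar S)"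
    and card: "card (rcar R) = card (rcar S)"
  shows "zd_graph_iso R S"
proof -
  interpret R: rng R by unfold_locales fact
  interpret S: rng S by unfold_locales fact
  have vR: "zd_vertices R = rcar R - {rzero R}" and vS: "zd_vertices S = rcar S - {rzero S}"
    using R S unfolding zd_vertices_def by auto
  then have "card (zd_vertices R) = card (zd_vertices S)"
    using card R(3) S(3) by simp
  then obtain f where f: "bij_betw f (zd_vertices R) (zd_vertices S)"
    using finite_same_card_bij R(3) S(3) vR vS by (metis finite_Diff)
  have "zd_adj R x y \<longleftrightarrow> zd_adj S (f x) (f y)" if "x \<in> zd_vertices R" "y \<in> zd_vertices R" for x y
  proof -
    have "f x \<in> zd_vertices S" "f y \<in> zd_vertices S"
      using f that bij_betwE by blast+
    moreover have "x = y \<longleftrightarrow> f x = f y"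
      using f that unfolding bij_betw_def inj_on_def by blast
    ultimately show ?thesis
      unfolding zd_adj_def using that vR vS R(2) S(2) by auto
  qed
  with f show ?thesis
    unfolding zd_graph_iso_def by blast
qed

lemma additive_map_nsmul:
  assumes "is_rng R" "is_rng S" and f: "\<forall>x\<in>rcar R. f x \<in> rcar S"
    "\<forall>x\<in>rcar R. \<forall>y\<in>rcar R. f (radd R x y) = radd S (f x) (f y)" and x: "x \<in> rcar R"
  shows "f (nsmul R k x) = nsmul S k (f x)"
proof (induction k)
  interpret R: rng R by unfold_locales fact
  interpret S: rng S by unfold_locales fact
  case 0
  have "radd S (f (rzero R)) (f (rzero R)) = f (rzero R)"
    using f R.zero_closed by (metis R.add_zero)
  then show ?case
    using f R.zero_closed S.add_left_imp_zero [of "f (rzero R)"] by simp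
next
  case (Suc k)
  interpret R: rng R by unfold_locales fact
  show ?case
    using f x Suc by simp
qed

lemma not_rng_iso_zero_ring_square:
  assumes q: "2 \<le> q"
  shows "\<not> rng_iso (zero_ring (q\<^sup>2)) (prod_ring (zero_ring q) (zero_ring q))"
proof
  let ?R = "zero_ring (q\<^sup>2)" and ?S = "prod_ring (zero_ring q) (zero_ring q)"
  assume "rng_iso ?R ?S"
  then obtain f where f: "bij_betw f (rcar ?R) (rcar ?S)"
    "\<forall>x\<in>rcar ?R. \<forall>y\<in>rcar ?R. f (radd ?R x y) = radd ?S (f x) (f y)"
    unfolding rng_iso_def by blast
  have rings: "is_rng ?R" "is_rng ?S"
    using q by (simp_all add: is_rng_zero_ring is_rng_prod_ring)
  have f_closed: "\<forall>x\<in>rcar ?R. f x \<in> rcar ?S"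
    using f(1) bij_betwE by blast
  have q_less: "q < q\<^sup>2"
    using q by (simp add: power2_eq_square)
  then have one: "1 \<in> rcar ?R"
    using q by simp
  text \<open>Every element of Z_q \<times> Z_q is killed by q, while q \<cdot> 1 \<noteq> 0 in Z_{q^2}.\<close>
  have "nsmul ?S q (f 1) = nsmul ?S 0 (f 1)"
    using f_closed one by (force simp: nsmul_prod_ring nsmul_zero_ring)
  then have "f (nsmul ?R q 1) = f (nsmul ?R 0 1)"
    using additive_map_nsmul [OF rings f_closed f(2) one] by metis
  then have "f q = f 0"
    using q_less by (simp add: nsmul_zero_ring)
  moreover have "q \<in> rcar ?R" "0 \<in> rcar ?R"
    using q_less q by auto
  ultimately show False
    using f(1) q unfolding bij_betw_def by (metis inj_onD not_numeral_le_zero)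
qed

section \<open>Annihilating integers of a variety\<close>

definition annihilates :: "rterm set \<Rightarrow> nat \<Rightarrow> bool" where
  "annihilates \<Sigma> m \<longleftrightarrow> (\<forall>R\<in>variety \<Sigma>. \<forall>a\<in>rcar R. nsmul R m a = rzero R)"

lemma rng_variety: "R \<in> variety \<Sigma> \<Longrightarrow> rng R"
  unfolding variety_def by unfold_locales auto

lemma annihilates_or_zero_rings_in_variety:
  "(\<exists>m>0. annihilates \<Sigma> m) \<or> (\<forall>n\<ge>1. zero_ring n \<in> variety \<Sigma>)"
proof (cases "\<forall>p\<in>\<Sigma>. \<forall>i. fst (lin_occs i p) = snd (lin_occs i p)")
  case True
  then have "zero_ring n \<in> variety \<Sigma>" if "1 \<le> n" for n
    using that by (simp add: variety_def is_rng_zero_ring zero_ring_satisfies_linear_free)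
  then show ?thesis
    by blast
next
  case False
  then obtain p i where p: "p \<in> \<Sigma>" and i: "fst (lin_occs i p) \<noteq> snd (lin_occs i p)"
    by blast
  define m where "m = elim_factor (term_degree p)
    * ((fst (lin_occs i p) - snd (lin_occs i p)) + (snd (lin_occs i p) - fst (lin_occs i p)))"
  have "0 < m"
    using i elim_factor_pos unfolding m_def by auto
  moreover have "annihilates \<Sigma> m"
    unfolding annihilates_def m_def
  proof (intro ballI)
    fix R a
    assume R: "R \<in> variety \<Sigma>" and "a \<in> rcar R"
    moreover from R p have "satisfies R p"
      by (simp add: variety_def)
    ultimately show "nsmul R (elim_factor (term_degree p)
      * ((fst (lin_occs i p) - snd (lin_occs i p)) + (snd (lin_occs i p) - fst (lin_occs i p)))) a = rzero R"
      using rng.identity_annihilates_lin_occs [OF rng_variety] by blast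
  qed
  ultimately show ?thesis
    by blast
qed

lemma zero_rings_in_variety_of_prime_fourth_power:
  assumes m: "annihilates \<Sigma> m" and q: "prime q" "q ^ 4 dvd m"
    and not_div: "\<not> annihilates \<Sigma> (m div q)"
  shows "zero_ring (q\<^sup>2) \<in> variety \<Sigma>" "zero_ring q \<in> variety \<Sigma>"
proof -
  obtain R a where R: "R \<in> variety \<Sigma>" and a: "a \<in> rcar R" and ne: "nsmul R (m div q) a \<noteq> rzero R"
    using not_div unfolding annihilates_def by auto
  interpret rng R
    using rng_variety [OF R] .
  obtain c where c: "c \<in> rcar R" and c_order: "\<And>k. nsmul R k c = rzero R \<longleftrightarrow> q\<^sup>2 dvd k"
    and cc: "rmul R c c = rzero R"
    using square_zero_element_of_order_prime_square [OF _ q a ne] m R unfolding annihilates_def by blast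
  define d where "d = nsmul R q c"
  have d: "d \<in> rcar R"
    using c by (simp add: d_def)
  have d_order: "nsmul R k d = rzero R \<longleftrightarrow> q dvd k" for k
    using c_order [of "k * q"] q(1) c by (simp add: d_def nsmul_mult power2_eq_square prime_gt_0_nat)
  have dd: "rmul R d d = rzero R"
    using c cc by (simp add: d_def nsmul_mul_left nsmul_mul_right)
  have q1: "1 \<le> q" "1 \<le> q\<^sup>2"
    using q(1) prime_gt_0_nat by (auto simp: Suc_le_eq)
  have "satisfies R p" if "p \<in> \<Sigma>" for p
    using R that by (simp add: variety_def)
  then show "zero_ring (q\<^sup>2) \<in> variety \<Sigma>" "zero_ring q \<in> variety \<Sigma>"
    using satisfies_zero_ring_of_order [OF c q1(2) c_order cc] satisfies_zero_ring_of_order [OF d q1(1) d_order dd]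
    by (simp_all add: variety_def is_rng_zero_ring [OF q1(1)] is_rng_zero_ring [OF q1(2)])
qed

definition graph_determined :: "nat rg set \<Rightarrow> bool" where
  "graph_determined M \<longleftrightarrow> (\<forall>R\<in>M. \<forall>S\<in>M.
     finite (rcar R) \<longrightarrow> finite (rcar S) \<longrightarrow> zd_graph_iso R S \<longrightarrow> rng_iso R S)"

lemma graph_determined_variety_excludes_zero_ring_square:
  assumes "graph_determined (variety \<Sigma>)"
    and q: "2 \<le> q" and Z: "zero_ring (q\<^sup>2) \<in> variety \<Sigma>" "zero_ring q \<in> variety \<Sigma>"
  shows False
proof -
  let ?S = "prod_ring (zero_ring q) (zero_ring q)"
  have q1: "1 \<le> q" "1 \<le> q\<^sup>2"
    using q by simp_all
  have "?S \<in> variety \<Sigma>"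
    using Z(2) q1 by (auto simp: variety_def is_rng_zero_ring is_rng_prod_ring satisfies_prod_ring)
  moreover have "card (rcar ?S) = q\<^sup>2"
    by (simp add: card_image [OF inj_prod_encode] card_cartesian_product power2_eq_square)
  then have "zd_graph_iso (zero_ring (q\<^sup>2)) ?S"
    using q1 by (intro zd_graph_iso_zero_mult) (simp_all add: is_rng_zero_ring is_rng_prod_ring)
  ultimately have "rng_iso (zero_ring (q\<^sup>2)) ?S"
    using assms(1) Z(1) unfolding graph_determined_def by simp
  then show False
    using not_rng_iso_zero_ring_square [OF q] by blast
qed

lemma graph_determined_annihilated:
  assumes "graph_determined (variety \<Sigma>)"
  shows "\<exists>m>0. annihilates \<Sigma> m"
proof -
  have "\<not> (\<forall>n\<ge>1. zero_ring n \<in> variety \<Sigma>)"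
  proof
    assume "\<forall>n\<ge>1. zero_ring n \<in> variety \<Sigma>"
    then show False
      using graph_determined_variety_excludes_zero_ring_square [OF assms order.refl] by simp
  qed
  then show ?thesis
    using annihilates_or_zero_rings_in_variety by blast
qed

lemma multiplicity_least_annihilator_le_3:
  assumes "graph_determined (variety \<Sigma>)"
    and m: "0 < m" "annihilates \<Sigma> m" and least: "\<And>k. 0 < k \<Longrightarrow> k < m \<Longrightarrow> \<not> annihilates \<Sigma> k"
    and q: "q \<in> prime_factors m"
  shows "multiplicity q m \<le> 3"
proof (rule ccontr)
  assume "\<not> multiplicity q m \<le> 3"
  then have dvd: "q ^ 4 dvd m"
    by (intro multiplicity_dvd') simp
  have prime: "prime q" "2 \<le> q"
    using q prime_ge_2_nat by auto
  then have "0 < m div q" "m div q < m"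
    using m dvd_trans [OF dvd_power [of 4 q] dvd] by (auto simp: dvd_div_eq_0_iff)
  then show False
    using graph_determined_variety_excludes_zero_ring_square [OF assms(1) prime(2)]
      zero_rings_in_variety_of_prime_fourth_power [OF m(2) prime(1) dvd] least by blast
qed

lemma smul_term_in_T_ideal: "annihilates \<Sigma> m \<Longrightarrow> smul_term m (Var 0) \<in> T_ideal (variety \<Sigma>)"
  by (auto simp: T_ideal_def satisfies_def eval_smul_term annihilates_def)

theorem proposition7:
  fixes \<Sigma> :: "rterm set"
  assumes "\<forall>R\<in>variety \<Sigma>. \<forall>S\<in>variety \<Sigma>.
             finite (rcar R) \<longrightarrow> finite (rcar S) \<longrightarrow> zd_graph_iso R S \<longrightarrow> rng_iso R S"
  shows "\<exists>m::nat. m > 0 \<and> (\<forall>q\<in>prime_factors m. multiplicity q m \<le> 3) \<and>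
           smul_term m (Var 0) \<in> T_ideal (variety \<Sigma>)"
proof -
  have det: "graph_determined (variety \<Sigma>)"
    using assms unfolding graph_determined_def .
  obtain m where m: "0 < m" "annihilates \<Sigma> m"
    and least: "\<And>k. k < m \<Longrightarrow> \<not> (0 < k \<and> annihilates \<Sigma> k)"
    using graph_determined_annihilated [OF det] exists_least_iff [of "\<lambda>m. 0 < m \<and> annihilates \<Sigma> m"]
    by blast
  then have "\<forall>q\<in>prime_factors m. multiplicity q m \<le> 3"
    using multiplicity_least_annihilator_le_3 [OF det] by blast
  with m show ?thesis
    using smul_term_in_T_ideal by blast
qed

end
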